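(* Let $\mathcal{I}$ be a $\mathrm{T}$-yardstick. Then there exists a unique positive integer $N$ such that (i) for all $t\in\mathrm{T}$, $\mathsf{end}_t^{\mathcal{I}}$ is $s^N$-reachable from $\mathsf{md}^{\mathcal{I}}$, and (ii) for all $t\in\mathrm{T}$, $\mathsf{end}_t^{\mathcal{I}}$ is $s^{N-1}$-reachable from $\mathsf{md}_t^{\mathcal{I}}$.
   Context: Let $r,s$ be role names, $r^{\#}s^{\#}:=\{r^ns^n\mid n\in\mathbb{N}\}$, and for a language $\mathcal{L}$ over $\{r,s\}$, $e$ is $\mathcal{L}$-reachable from $d$ in an interpretation $\mathcal{I}$ if there is a sequence of elements from $d$ to $e$ whose consecutive pairs are connected by the roles spelling a word of $\mathcal{L}$. Let $\mathrm{T}$ be a finite non-empty set and $N_{\mathrm{T}}:=\{\mathsf{st},\mathsf{md},\mathsf{md}_t,\mathsf{end}_t\mid t\in\mathrm{T}\}$ pairwise distinct individual names. A $\mathrm{T}$-yardstick is an interpretation $\mathcal{I}$ such that: (YNom) the $N_{\mathrm{T}}$-named elements are pairwise different and $(r+s)^*$-reachable from $\mathsf{st}^{\mathcal{I}}$; (YNoLoop) no $N_{\mathrm{T}}$-named element can $(r+s)^+$-reach itself; (YMid) $\mathsf{md}^{\mathcal{I}}$ is the unique element $r^*$-reachable from $\mathsf{st}^{\mathcal{I}}$ that has an $s$-successor; (YSuccOfMid) the $s$-successors of $\mathsf{md}^{\mathcal{I}}$ are exactly the elements $\mathsf{md}_t^{\mathcal{I}}$, $t\in\mathrm{T}$; (YReachMidT)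 for every $t$, $\mathsf{md}_t^{\mathcal{I}}$ can $s^*$-reach $\mathsf{end}_t^{\mathcal{I}}$ but cannot $s^*$-reach $\mathsf{end}_{t'}^{\mathcal{I}}$ for $t'\neq t$; (YEqDst) the elements $r^{\#}s^{\#}$-reachable from $\mathsf{st}^{\mathcal{I}}$ are exactly the elements $\mathsf{end}_t^{\mathcal{I}}$, $t\in\mathrm{T}$; (YNoEqDst) no element $\mathsf{end}_t^{\mathcal{I}}$ is $r^{\#}s^{\#}$-reachable from an element that is $(r+s)^+$-reachable from $\mathsf{st}^{\mathcal{I}}$. *)

theory Defs
  imports Main
begin

datatype role = R | S

datatype 't iname = St | Md | MdT 't | EndT 't

record ('d, 't) interp =
  dom :: "'d set"
  rol :: "role \<Rightarrow> ('d \<times> 'd) set"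
  ind :: "'t iname \<Rightarrow> 'd"

definition wf_interp :: "('d, 't) interp \<Rightarrow> bool" where
  "wf_interp I \<longleftrightarrow> dom I \<noteq> {} \<and> (\<forall>a. rol I a \<subseteq> dom I \<times> dom I) \<and> (\<forall>n. ind I n \<in> dom I)"

inductive walk :: "('d, 't) interp \<Rightarrow> role list \<Rightarrow> 'd \<Rightarrow> 'd \<Rightarrow> bool" for I where
  walk_nil: "walk I [] d d"
| walk_cons: "(d, d') \<in> rol I a \<Longrightarrow> walk I w d' e \<Longrightarrow> walk I (a # w) d e"

definition reach :: "('d, 't) interp \<Rightarrow> role list set \<Rightarrow> 'd \<Rightarrow> 'd \<Rightarrow> bool" where
  "reach I L d e \<longleftrightarrow> (\<exists>w\<in>L. walk I w d e)"

definition lang_all :: "role list set" where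
  "lang_all = UNIV"
definition lang_plus :: "role list set" where
  "lang_plus = {w. w \<noteq> []}"
definition lang_rstar :: "role list set" where
  "lang_rstar = {w. set w \<subseteq> {R}}"
definition lang_sstar :: "role list set" where
  "lang_sstar = {w. set w \<subseteq> {S}}"
definition lang_rs :: "role list set" where
  "lang_rs = {replicate n R @ replicate n S | n. n \<ge> 1}"
definition lang_spow :: "nat \<Rightarrow> role list set" where
  "lang_spow n = {replicate n S}"

definition named :: "'t set \<Rightarrow> 't iname set" where
  "named T = {St, Md} \<union> MdT ` T \<union> EndT ` T"

definition yardstick :: "'t set \<Rightarrow> ('d, 't) interp \<Rightarrow> bool" where
  "yardstick T I \<longleftrightarrow>
    wf_interp I \<and>
    \<comment> \<open>YNom\<close>
    inj_on (ind I) (named T) \<and>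
    (\<forall>n\<in>named T. reach I lang_all (ind I St) (ind I n)) \<and>
    \<comment> \<open>YNoLoop\<close>
    (\<forall>n\<in>named T. \<not> reach I lang_plus (ind I n) (ind I n)) \<and>
    \<comment> \<open>YMid\<close>
    (reach I lang_rstar (ind I St) (ind I Md) \<and> (\<exists>e. (ind I Md, e) \<in> rol I S) \<and>
     (\<forall>x. reach I lang_rstar (ind I St) x \<and> (\<exists>e. (x, e) \<in> rol I S) \<longrightarrow> x = ind I Md)) \<and>
    \<comment> \<open>YSuccOfMid\<close>
    {e. (ind I Md, e) \<in> rol I S} = (\<lambda>t. ind I (MdT t)) ` T \<and>
    \<comment> \<open>YReachMidT\<close>
    (\<forall>t\<in>T. reach I lang_sstar (ind I (MdT t)) (ind I (EndT t)) \<and>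
       (\<forall>t'\<in>T. t' \<noteq> t \<longrightarrow> \<not> reach I lang_sstar (ind I (MdT t)) (ind I (EndT t')))) \<and>
    \<comment> \<open>YEqDst\<close>
    {e. reach I lang_rs (ind I St) e} = (\<lambda>t. ind I (EndT t)) ` T \<and>
    \<comment> \<open>YNoEqDst\<close>
    (\<forall>t\<in>T. \<forall>x. reach I lang_plus (ind I St) x \<longrightarrow> \<not> reach I lang_rs x (ind I (EndT t)))"

end

theory Submission
  imports Defs
begin

text \<open>
  By YEqDst some \<open>r\<^sup>K s\<^sup>K\<close>-walk leads from \<open>st\<close> to an element \<open>end_t\<close>; by YMid it passes
  through \<open>md\<close> after its \<open>r\<close>-part, \<open>md\<close> being the only \<open>r\<^sup>*\<close>-reachable element with an
  \<open>s\<close>-successor. Every \<open>s\<^sup>n\<close>-walk (\<open>n \<ge> 1\<close>) from \<open>md\<close> to an element \<open>end_t\<close> has length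
  \<open>n = K\<close>: if \<open>n < K\<close>, the element \<open>n\<close> steps before \<open>md\<close> on the \<open>r\<close>-walk would
  \<open>r\<^sup>n s\<^sup>n\<close>-reach \<open>end_t\<close>, against YNoEqDst; if \<open>n > K\<close>, the element reached after
  \<open>s\<^sup>K\<close> is \<open>r\<^sup>K s\<^sup>K\<close>-reachable from \<open>st\<close>, hence some \<open>end_t'\<close>, and as both \<open>end_t\<close>
  and \<open>end_t'\<close> are \<open>s\<^sup>*\<close>-reachable from the same \<open>md_t''\<close>, YReachMidT forces
  \<open>t = t'' = t'\<close> and thus an \<open>s\<close>-loop at \<open>end_t\<close>, against YNoLoop. Similarly, the first
  step of the \<open>s\<^sup>K\<close>-walk to \<open>end_t\<close> goes to some \<open>md_t''\<close> with \<open>t'' = t\<close>.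
\<close>

lemma walk_Nil_iff: "walk I [] d e \<longleftrightarrow> d = e"
  by (auto intro: walk.intros elim: walk.cases)

lemma walk_Cons_iff: "walk I (a # w) d e \<longleftrightarrow> (\<exists>d'. (d, d') \<in> rol I a \<and> walk I w d' e)"
  by (auto intro: walk.intros elim: walk.cases)

lemma walk_append_iff: "walk I (u @ v) d e \<longleftrightarrow> (\<exists>m. walk I u d m \<and> walk I v m e)"
  by (induction u arbitrary: d) (auto simp: walk_Nil_iff walk_Cons_iff)

lemma walk_replicate_add_iff:
  "walk I (replicate (m + n) a) d e \<longleftrightarrow>
     (\<exists>x. walk I (replicate m a) d x \<and> walk I (replicate n a) x e)"
  by (simp add: replicate_add walk_append_iff)

lemma walk_replicate_Suc_iff:
  "walk I (replicate (Suc n) a) d e \<longleftrightarrow> (\<exists>x. (d, x) \<in> rol I a \<and> walk I (replicate n a) x e)"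
  by (simp add: walk_Cons_iff)

lemma set_subset_singleton_iff_replicate: "set w \<subseteq> {a} \<longleftrightarrow> (\<exists>n. w = replicate n a)"
proof
  assume "set w \<subseteq> {a}"
  then have "replicate (length w) a = w"
    by (intro replicate_length_same) auto
  then show "\<exists>n. w = replicate n a"
    by metis
qed auto

lemma reach_lang_spow_iff: "reach I (lang_spow n) d e \<longleftrightarrow> walk I (replicate n S) d e"
  by (simp add: reach_def lang_spow_def)

lemma reach_lang_sstar_iff: "reach I lang_sstar d e \<longleftrightarrow> (\<exists>n. walk I (replicate n S) d e)"
  unfolding reach_def lang_sstar_def set_subset_singleton_iff_replicate by auto

lemma reach_lang_rstar_iff: "reach I lang_rstar d e \<longleftrightarrow> (\<exists>n. walk I (replicate n R) d e)"
  unfolding reach_def lang_rstar_def set_subset_singleton_iff_replicate by auto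

lemma reach_lang_rs_iff:
  "reach I lang_rs d e \<longleftrightarrow> (\<exists>n\<ge>1. walk I (replicate n R @ replicate n S) d e)"
  unfolding reach_def lang_rs_def by blast

lemma reach_lang_plusI: "walk I w d e \<Longrightarrow> w \<noteq> [] \<Longrightarrow> reach I lang_plus d e"
  unfolding reach_def lang_plus_def by blast

locale yardstick_interp =
  fixes T :: "'t set" and I :: "('d, 't) interp"
  assumes yardstick: "yardstick T I"
begin

lemma endT_no_loop:
  assumes "t \<in> T" and "walk I w (ind I (EndT t)) (ind I (EndT t))"
  shows "w = []"
proof -
  have "\<forall>n\<in>named T. \<not> reach I lang_plus (ind I n) (ind I n)"
    using yardstick unfolding yardstick_def by (elim conjE) assumption
  moreover have "EndT t \<in> named T"
    using \<open>t \<in> T\<close> by (simp add: named_def)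
  ultimately have "\<not> reach I lang_plus (ind I (EndT t)) (ind I (EndT t))"
    by blast
  with assms(2) show ?thesis
    by (metis reach_lang_plusI)
qed

lemma md_unique:
  assumes "reach I lang_rstar (ind I St) x" and "(x, y) \<in> rol I S"
  shows "x = ind I Md"
proof -
  have "\<forall>x. reach I lang_rstar (ind I St) x \<and> (\<exists>e. (x, e) \<in> rol I S) \<longrightarrow> x = ind I Md"
    using yardstick unfolding yardstick_def by (elim conjE) assumption
  with assms show ?thesis by blast
qed

lemma s_successor_of_md:
  assumes "(ind I Md, y) \<in> rol I S"
  obtains t where "t \<in> T" and "y = ind I (MdT t)"
proof -
  have "{e. (ind I Md, e) \<in> rol I S} = (\<lambda>t. ind I (MdT t)) ` T"
    using yardstick unfolding yardstick_def by (elim conjE) assumption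
  with assms that show ?thesis by blast
qed

lemma mdT_s_walk_endT_eq:
  assumes "t \<in> T" and "t' \<in> T" and "walk I (replicate k S) (ind I (MdT t')) (ind I (EndT t))"
  shows "t' = t"
proof -
  have "\<forall>t\<in>T. reach I lang_sstar (ind I (MdT t)) (ind I (EndT t)) \<and>
       (\<forall>t'\<in>T. t' \<noteq> t \<longrightarrow> \<not> reach I lang_sstar (ind I (MdT t)) (ind I (EndT t')))"
    using yardstick unfolding yardstick_def by (elim conjE) assumption
  moreover have "reach I lang_sstar (ind I (MdT t')) (ind I (EndT t))"
    using assms(3) by (auto simp: reach_lang_sstar_iff)
  ultimately show ?thesis
    using assms(1,2) by metis
qed

lemma reach_lang_rs_from_st_iff:
  "reach I lang_rs (ind I St) e \<longleftrightarrow> (\<exists>t\<in>T. e = ind I (EndT t))"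
proof -
  have "{e. reach I lang_rs (ind I St) e} = (\<lambda>t. ind I (EndT t)) ` T"
    using yardstick unfolding yardstick_def by (elim conjE) assumption
  then show ?thesis by blast
qed

lemma no_reach_lang_rs_endT_from_successor:
  assumes "t \<in> T" and "reach I lang_plus (ind I St) x"
  shows "\<not> reach I lang_rs x (ind I (EndT t))"
proof -
  have "\<forall>t\<in>T. \<forall>x. reach I lang_plus (ind I St) x \<longrightarrow> \<not> reach I lang_rs x (ind I (EndT t))"
    using yardstick unfolding yardstick_def by (elim conjE) assumption
  with assms show ?thesis by blast
qed

lemma s_walk_from_md:
  assumes "walk I (replicate (Suc n) S) (ind I Md) x"
  obtains t where "t \<in> T" and "(ind I Md, ind I (MdT t)) \<in> rol I S"
    and "walk I (replicate n S) (ind I (MdT t)) x"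
proof -
  obtain y where y_succ: "(ind I Md, y) \<in> rol I S" and y_walk: "walk I (replicate n S) y x"
    using assms unfolding walk_replicate_Suc_iff by blast
  obtain t where "t \<in> T" and "y = ind I (MdT t)"
    using y_succ by (rule s_successor_of_md)
  with y_succ y_walk show ?thesis
    using that[of t] by simp
qed

lemma s_walk_md_endT_via_mdT:
  assumes "t \<in> T" and "n \<ge> 1" and "walk I (replicate n S) (ind I Md) (ind I (EndT t))"
  shows "walk I (replicate (n - 1) S) (ind I (MdT t)) (ind I (EndT t))"
proof -
  obtain k where n_eq: "n = Suc k"
    using \<open>n \<ge> 1\<close> by (cases n) auto
  obtain t' where "t' \<in> T" and walk: "walk I (replicate k S) (ind I (MdT t')) (ind I (EndT t))"
    using assms(3) unfolding n_eq by (rule s_walk_from_md)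
  then have "t' = t"
    using \<open>t \<in> T\<close> by (blast intro: mdT_s_walk_endT_eq)
  with walk show ?thesis
    by (simp add: n_eq)
qed

lemma rs_walk_from_st_via_md:
  assumes "walk I (replicate n R @ replicate n S) (ind I St) e" and "n \<ge> 1"
  shows "walk I (replicate n R) (ind I St) (ind I Md) \<and> walk I (replicate n S) (ind I Md) e"
proof -
  obtain x where r_walk: "walk I (replicate n R) (ind I St) x" and s_walk: "walk I (replicate n S) x e"
    using assms(1) by (auto simp: walk_append_iff)
  have "reach I lang_rstar (ind I St) x"
    using r_walk by (auto simp: reach_lang_rstar_iff)
  moreover obtain y where "(x, y) \<in> rol I S"
    using s_walk \<open>n \<ge> 1\<close> by (cases n) (auto simp: walk_Cons_iff)
  ultimately have "x = ind I Md"
    by (rule md_unique)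
  with r_walk s_walk show ?thesis by simp
qed

lemma endT_balanced_walk:
  assumes "t \<in> T"
  obtains n where "n \<ge> 1" and "walk I (replicate n R) (ind I St) (ind I Md)"
    and "walk I (replicate n S) (ind I Md) (ind I (EndT t))"
proof -
  have "reach I lang_rs (ind I St) (ind I (EndT t))"
    using assms by (auto simp: reach_lang_rs_from_st_iff)
  then obtain n where "n \<ge> 1" and "walk I (replicate n R @ replicate n S) (ind I St) (ind I (EndT t))"
    by (auto simp: reach_lang_rs_iff)
  with rs_walk_from_st_via_md that show ?thesis
    by blast
qed

lemma s_walk_md_endT_not_shorter:
  assumes r_walk: "walk I (replicate m R) (ind I St) (ind I Md)"
    and s_walk: "walk I (replicate n S) (ind I Md) (ind I (EndT t))"
    and "t \<in> T" and "n \<ge> 1"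
  shows "m \<le> n"
proof (rule ccontr)
  assume "\<not> m \<le> n"
  then obtain x where x_first: "walk I (replicate (m - n) R) (ind I St) x"
    and x_rest: "walk I (replicate n R) x (ind I Md)" and "m - n \<noteq> 0"
    using r_walk walk_replicate_add_iff[of I "m - n" n] by auto
  have "reach I lang_plus (ind I St) x"
    using x_first \<open>m - n \<noteq> 0\<close> by (simp add: reach_lang_plusI)
  moreover have "reach I lang_rs x (ind I (EndT t))"
    using x_rest s_walk \<open>n \<ge> 1\<close> by (auto simp: reach_lang_rs_iff walk_append_iff)
  ultimately show False
    using no_reach_lang_rs_endT_from_successor \<open>t \<in> T\<close> by blast
qed

lemma s_walk_md_endT_not_longer:
  assumes r_walk: "walk I (replicate m R) (ind I St) (ind I Md)"
    and s_walk: "walk I (replicate n S) (ind I Md) (ind I (EndT t))"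
    and "t \<in> T" and "m \<ge> 1"
  shows "n \<le> m"
proof (rule ccontr)
  assume "\<not> n \<le> m"
  define k where "k = m - 1"
  have m_eq: "m = Suc k" and n_eq: "n = Suc (k + (n - m))" and "n - m \<noteq> 0"
    using \<open>m \<ge> 1\<close> \<open>\<not> n \<le> m\<close> by (auto simp: k_def)
  obtain t' where "t' \<in> T" and md_mdT: "(ind I Md, ind I (MdT t')) \<in> rol I S"
    and mdT_endT: "walk I (replicate (k + (n - m)) S) (ind I (MdT t')) (ind I (EndT t))"
    using s_walk n_eq by (metis s_walk_from_md)
  then obtain y where mdT_y: "walk I (replicate k S) (ind I (MdT t')) y"
    and y_endT: "walk I (replicate (n - m) S) y (ind I (EndT t))"
    by (auto simp: walk_replicate_add_iff)
  have "t' = t"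
    using \<open>t \<in> T\<close> \<open>t' \<in> T\<close> mdT_endT by (rule mdT_s_walk_endT_eq)
  have "walk I (replicate m S) (ind I Md) y"
    using md_mdT mdT_y by (auto simp: m_eq walk_Cons_iff)
  then have "reach I lang_rs (ind I St) y"
    using r_walk \<open>m \<ge> 1\<close> by (auto simp: reach_lang_rs_iff walk_append_iff)
  then obtain t'' where "t'' \<in> T" and y_eq: "y = ind I (EndT t'')"
    by (auto simp: reach_lang_rs_from_st_iff)
  then have "t' = t''"
    using \<open>t' \<in> T\<close> mdT_y by (blast intro: mdT_s_walk_endT_eq)
  then have "walk I (replicate (n - m) S) (ind I (EndT t)) (ind I (EndT t))"
    using y_endT y_eq \<open>t' = t\<close> by simp
  with \<open>t \<in> T\<close> \<open>n - m \<noteq> 0\<close> show False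
    using endT_no_loop by fastforce
qed

lemma s_walk_md_endT_length:
  assumes "walk I (replicate m R) (ind I St) (ind I Md)"
    and "walk I (replicate n S) (ind I Md) (ind I (EndT t))"
    and "t \<in> T" and "m \<ge> 1" and "n \<ge> 1"
  shows "n = m"
  using s_walk_md_endT_not_shorter[OF assms(1-3,5)] s_walk_md_endT_not_longer[OF assms(1-4)]
  by simp


lemma s_walk_md_endT_common_length:
  assumes "T \<noteq> {}"
  obtains K where "K \<ge> 1" and "walk I (replicate K R) (ind I St) (ind I Md)"
    and "\<And>t. t \<in> T \<Longrightarrow> walk I (replicate K S) (ind I Md) (ind I (EndT t))"
proof -
  obtain t0 where "t0 \<in> T"
    using assms by blast
  then obtain K where "K \<ge> 1" and r_walk: "walk I (replicate K R) (ind I St) (ind I Md)"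
    by (rule endT_balanced_walk)
  moreover have "walk I (replicate K S) (ind I Md) (ind I (EndT t))" if "t \<in> T" for t
  proof -
    obtain n where "n \<ge> 1" and s_walk: "walk I (replicate n S) (ind I Md) (ind I (EndT t))"
      using \<open>t \<in> T\<close> by (rule endT_balanced_walk)
    with s_walk_md_endT_length[OF r_walk s_walk that \<open>K \<ge> 1\<close>] show ?thesis
      by simp
  qed
  ultimately show ?thesis
    by (rule that)
qed

end

theorem lemma4p7:
  fixes T :: "'t set" and I :: "('d, 't) interp"
  assumes "finite T" and "T \<noteq> {}"
    and "yardstick T I"
  shows "\<exists>!N::nat. N > 0 \<and>
           (\<forall>t\<in>T. reach I (lang_spow N) (ind I Md) (ind I (EndT t))) \<and>
           (\<forall>t\<in>T. reach I (lang_spow (N - 1)) (ind I (MdT t)) (ind I (EndT t)))"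
proof -
  interpret yardstick_interp T I
    by (rule yardstick_interp.intro) (fact assms(3))
  obtain K where "K \<ge> 1" and r_walk: "walk I (replicate K R) (ind I St) (ind I Md)"
    and md_endT: "\<And>t. t \<in> T \<Longrightarrow> walk I (replicate K S) (ind I Md) (ind I (EndT t))"
    using s_walk_md_endT_common_length[OF \<open>T \<noteq> {}\<close>] by blast
  obtain t0 where "t0 \<in> T"
    using \<open>T \<noteq> {}\<close> by blast
  show ?thesis
  proof (rule ex1I[of _ K])
    show "K > 0 \<and> (\<forall>t\<in>T. reach I (lang_spow K) (ind I Md) (ind I (EndT t))) \<and>
          (\<forall>t\<in>T. reach I (lang_spow (K - 1)) (ind I (MdT t)) (ind I (EndT t)))"
      using \<open>K \<ge> 1\<close> md_endT s_walk_md_endT_via_mdT by (simp add: reach_lang_spow_iff)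
  next
    fix N
    assume "N > 0 \<and> (\<forall>t\<in>T. reach I (lang_spow N) (ind I Md) (ind I (EndT t))) \<and>
            (\<forall>t\<in>T. reach I (lang_spow (N - 1)) (ind I (MdT t)) (ind I (EndT t)))"
    then have "N \<ge> 1" and "walk I (replicate N S) (ind I Md) (ind I (EndT t0))"
      using \<open>t0 \<in> T\<close> by (auto simp: reach_lang_spow_iff)
    then show "N = K"
      using s_walk_md_endT_length[OF r_walk _ \<open>t0 \<in> T\<close> \<open>K \<ge> 1\<close>] by blast
  qed
qed

end
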